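(* $$\bigcap_{m\ge1}\mathcal{P}_m=\bigcap_{m\ge1,\ m\text{ odd}}\mathcal{P}_m=\langle A_1,A_2\rangle,$$ where $\langle A_1,A_2\rangle$ is the $\mathbb{Z}$-submodule of $\mathbb{Z}^{24}$ generated by $A_1=(1,0,-1)^8=(1,0,-1,1,0,-1,\dots,1,0,-1)$ and $A_2=(0,1,-1,-1,3,-2,-2,5,-3,-3,7,-4,-4,9,-5,-5,11,-6,-6,13,-7,-7,15,-8)$.
   Context: For a positive integer $m$, $\mathcal{P}_m$ is the set of $A\in\mathbb{Z}^{24}$ such that the orbit of $\mathrm{IAP}(\pi_m(A),\pi_m(A)X_{24})$ is $(24m,24m)$-periodic in $\mathbb{Z}/m\mathbb{Z}$. Here $\pi_m$ is reduction mod $m$; tuples are row vectors; $X_{24}=(\delta_{r,s}+\delta_{r,25-s})_{1\le r,s\le24}$. For $24$-tuples $A=(a_0,\dots,a_{23})$, $D=(d_0,\dots,d_{23})$, $\mathrm{IAP}(A,D)=(u_j)_{j\in\mathbb{Z}}$ with $u_{24q+r}=a_r+qd_r$. The orbit of $(u_j)$ is $(a_{i,j})_{(i,j)\in\mathbb{N}\times\mathbb{Z}}$ with $a_{0,j}=u_j$, $a_{i,j}=-a_{i-1,j}-a_{i-1,j+1}$; it is $(p,q)$-periodic if $a_{i+q,j}=a_{i,j+p}=a_{i,j}$ for all $(i,j)$. *)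

theory Defs
  imports "HOL-Number_Theory.Cong"
begin

text \<open>24-tuples are int lists of length 24, indexed 0..23 (a_0,...,a_23).
Elements of Z/mZ are represented by integers; equality in Z/mZ is congruence mod m.\<close>

definition X24 :: "nat \<Rightarrow> nat \<Rightarrow> int" where
  "X24 r s = (if r = s then 1 else 0) + (if r = 23 - s then 1 else 0)"
  \<comment> \<open>0-indexed version of (delta(r,s) + delta(r,25-s)) for 1 <= r,s <= 24\<close>

definition rowmat :: "int list \<Rightarrow> int list" where
  "rowmat A = map (\<lambda>s. \<Sum>r<24. A ! r * X24 r s) [0..<24]"

definition redmod :: "nat \<Rightarrow> int list \<Rightarrow> int list" where
  "redmod m A = map (\<lambda>x. x mod int m) A"

definition IAP :: "int list \<Rightarrow> int list \<Rightarrow> int \<Rightarrow> int" where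
  "IAP A D j = A ! nat (j mod 24) + (j div 24) * D ! nat (j mod 24)"

primrec orbit :: "(int \<Rightarrow> int) \<Rightarrow> nat \<Rightarrow> int \<Rightarrow> int" where
  "orbit u 0 j = u j"
| "orbit u (Suc i) j = - orbit u i j - orbit u i (j + 1)"

definition periodic_mod :: "nat \<Rightarrow> int \<Rightarrow> nat \<Rightarrow> (nat \<Rightarrow> int \<Rightarrow> int) \<Rightarrow> bool" where
  "periodic_mod m p q a \<longleftrightarrow>
     (\<forall>i j. [a (i + q) j = a i j] (mod int m) \<and> [a i (j + p) = a i j] (mod int m))"

definition Pset :: "nat \<Rightarrow> int list set" where
  "Pset m = {A. length A = 24 \<and>
     periodic_mod m (24 * int m) (24 * m)
       (orbit (IAP (redmod m A) (redmod m (rowmat (redmod m A)))))}"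

definition A1 :: "int list" where
  "A1 = concat (replicate 8 [1, 0, -1])"

definition A2 :: "int list" where
  "A2 = [0,1,-1,-1,3,-2,-2,5,-3,-3,7,-4,-4,9,-5,-5,11,-6,-6,13,-7,-7,15,-8]"

definition span2 :: "int list \<Rightarrow> int list \<Rightarrow> int list set" where
  "span2 B C = {map2 (\<lambda>x y. a * x + b * y) B C | a b :: int. True}"

end

theory Submission
  imports Defs "HOL-Computational_Algebra.Primes" "HOL-Computational_Algebra.Polynomial"
begin

text \<open>Write u for the progression of A and S for the shift, so that the orbit step is
  -(1 + S). The progressions of A1 and A2 are explicit sequences on which three orbit steps
  act as the identity up to a period-3 drift, which gives (24m, 24m)-periodicity modulo
  every m.

  Conversely, Frobenius gives (1 + S)^(24 p^2) = (1 + S^(p^2))^24 modulo a prime p, and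
  p^2 = 1 modulo 24 for p >= 5. Splitting 24 u(n) = b(n) + n d(n) with 24-periodic b and d
  (offset and common_diff below), membership in P_(p^2) becomes a congruence modulo p that
  does not depend on p, hence an identity: (1 + S)^24 fixes b and d. On 24-periodic
  sequences this forces 1 + S + S^2 to kill them, and these period-3 constraints together
  with the symmetry of X24 leave only the span of A1 and A2.\<close>

lemma orbit_0 [simp]: "orbit u 0 = u"
  by (simp add: fun_eq_iff)

lemma orbit_add: "orbit u (a + b) = orbit (orbit u b) a"
  by (induction a) (simp_all add: fun_eq_iff)

lemma orbit_plus: "orbit (\<lambda>n. f n + g n) i j = orbit f i j + orbit g i j"
  by (induction i arbitrary: j) (auto simp: algebra_simps)

lemma orbit_scale: "orbit (\<lambda>n. c * f n) i j = c * orbit f i j"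
  by (induction i arbitrary: j) (auto simp: algebra_simps)

lemma orbit_shift: "orbit (\<lambda>n. f (n + c)) i j = orbit f i (j + c)"
  by (induction i arbitrary: j) (simp_all add: ac_simps)

lemma orbit_cong:
  assumes "\<And>n. [f n = g n] (mod m)"
  shows "[orbit f i j = orbit g i j] (mod m)"
proof (induction i arbitrary: j)
  case 0
  then show ?case using assms by simp
next
  case (Suc i)
  then show ?case
    by (simp add: cong_diff cong_minus_minus_iff del: diff_minus_eq_add)
qed

section \<open>Polynomials acting as shift operators\<close>

definition poly_shift :: "'a::comm_ring_1 poly \<Rightarrow> (int \<Rightarrow> 'a) \<Rightarrow> int \<Rightarrow> 'a" where
  "poly_shift p f j = (\<Sum>i\<le>degree p. coeff p i * f (j + int i))"

lemma poly_shift_conv_sum: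
  assumes "degree p \<le> n"
  shows "poly_shift p f j = (\<Sum>i\<le>n. coeff p i * f (j + int i))"
  unfolding poly_shift_def
  using assms by (intro sum.mono_neutral_left) (auto simp: coeff_eq_0)

lemma poly_shift_pCons: "poly_shift (pCons a p) f j = a * f j + poly_shift p f (j + 1)"
proof -
  have "poly_shift (pCons a p) f j
      = (\<Sum>i\<le>Suc (degree p). coeff (pCons a p) i * f (j + int i))"
    by (rule poly_shift_conv_sum) (rule degree_pCons_le)
  also have "\<dots> = a * f j + poly_shift p f (j + 1)"
    unfolding sum.atMost_Suc_shift by (simp add: poly_shift_def ac_simps)
  finally show ?thesis .
qed

lemma poly_shift_add: "poly_shift (p + q) f j = poly_shift p f j + poly_shift q f j"
proof -
  define n where "n = max (degree p) (degree q)"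
  have "degree (p + q) \<le> n" "degree p \<le> n" "degree q \<le> n"
    unfolding n_def by (auto intro: degree_add_le)
  then show ?thesis
    by (simp add: poly_shift_conv_sum[of _ n] sum.distrib algebra_simps)
qed

lemma poly_shift_smult: "poly_shift (smult a p) f j = a * poly_shift p f j"
  unfolding poly_shift_conv_sum[OF degree_smult_le]
  by (simp add: poly_shift_def sum_distrib_left ac_simps)

lemma poly_shift_diff: "poly_shift (p - q) f j = poly_shift p f j - poly_shift q f j"
  using poly_shift_add[of "p - q" q f j] by simp

lemma poly_shift_0 [simp]: "poly_shift 0 f j = 0"
  by (simp add: poly_shift_def)

lemma poly_shift_zero_fun [simp]: "poly_shift p (\<lambda>_. 0) = (\<lambda>_. 0)"
  by (simp add: poly_shift_def fun_eq_iff)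

lemma poly_shift_one [simp]: "poly_shift 1 f = f"
  by (simp add: poly_shift_def fun_eq_iff)

lemma poly_shift_monom_one: "poly_shift (monom 1 n) f j = f (j + int n)"
proof -
  have "poly_shift (monom 1 n) f j = (\<Sum>i\<le>n. if i = n then f (j + int i) else 0)"
    unfolding poly_shift_def degree_monom_eq[OF one_neq_zero] by (rule sum.cong) auto
  then show ?thesis by simp
qed

lemma poly_shift_mult: "poly_shift (p * q) f = poly_shift p (poly_shift q f)"
proof (induction p)
  case 0
  show ?case by (simp add: fun_eq_iff poly_shift_def)
next
  case (pCons a p)
  show ?case
    by (simp add: fun_eq_iff poly_shift_add poly_shift_smult poly_shift_pCons pCons.IH)
qed

lemma orbit_eq_poly_shift: "orbit u n = poly_shift ([:-1, -1:] ^ n) u"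
proof (induction n)
  case 0
  show ?case by (simp add: fun_eq_iff)
next
  case (Suc n)
  have "orbit u (Suc n) = poly_shift [:-1, -1:] (orbit u n)"
    by (simp add: fun_eq_iff poly_shift_pCons poly_shift_def)
  also have "\<dots> = poly_shift ([:-1, -1:] ^ Suc n) u"
    by (simp only: Suc.IH power_Suc poly_shift_mult)
  finally show ?case .
qed

lemma orbit_binomial: "orbit f n j = (-1) ^ n * (\<Sum>k\<le>n. int (n choose k) * f (j + int k))"
proof -
  have "degree ([:-1, -1:] ^ n :: int poly) \<le> n"
    using degree_power_le[of "[:-1, -1:]" n] by simp
  then have "orbit f n j = (\<Sum>k\<le>n. coeff ([:-1, -1:] ^ n) k * f (j + int k))"
    by (simp add: orbit_eq_poly_shift poly_shift_conv_sum)
  also have "\<dots> = (\<Sum>k\<le>n. (-1) ^ n * (int (n choose k) * f (j + int k)))"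
    by (intro sum.cong refl)
       (simp add: coeff_linear_poly_power power_add[symmetric])
  finally show ?thesis by (simp add: sum_distrib_left)
qed

section \<open>Frobenius for the orbit operator\<close>

lemma orbit_prime_cong:
  assumes p: "prime p" "odd p"
  shows "[orbit f p j = - (f j + f (j + int p))] (mod int p)"
proof -
  have p0: "p > 0" using p prime_gt_0_nat by blast
  have split: "(\<Sum>k\<le>p. int (p choose k) * f (j + int k))
      = (\<Sum>k\<in>{1..<p}. int (p choose k) * f (j + int k)) + f j + f (j + int p)"
  proof -
    have "{..p} = insert 0 (insert p {1..<p})" using p0 by auto
    then show ?thesis using p0 by (simp add: algebra_simps)
  qed
  have "int p dvd (\<Sum>k\<in>{1..<p}. int (p choose k) * f (j + int k))"
    using p by (intro dvd_sum) (auto intro!: dvd_mult2 simp: dvd_choose_prime int_dvd_int_iff)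
  then have "[(\<Sum>k\<le>p. int (p choose k) * f (j + int k)) = f j + f (j + int p)] (mod int p)"
    by (simp add: split cong_iff_dvd_diff)
  then have "[- (\<Sum>k\<le>p. int (p choose k) * f (j + int k))
      = - (f j + f (j + int p))] (mod int p)"
    by (simp only: cong_minus_minus_iff)
  then show ?thesis
    using p by (simp add: orbit_binomial)
qed

lemma orbit_mult_prime_cong:
  assumes p: "prime p" "odd p"
  shows "[orbit f (c * p) j = orbit (\<lambda>k. f (j + k * int p)) c 0] (mod int p)"
proof (induction c arbitrary: f j)
  case 0
  show ?case by simp
next
  case (Suc c)
  have "orbit f (Suc c * p) j = orbit (orbit f p) (c * p) j"
    by (simp add: orbit_add[symmetric] add.commute)
  also have "[\<dots> = orbit (\<lambda>k. orbit f p (j + k * int p)) c 0] (mod int p)"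
    by (rule Suc.IH)
  also have "[orbit (\<lambda>k. orbit f p (j + k * int p)) c 0
      = orbit (\<lambda>k. - (f (j + k * int p) + f (j + k * int p + int p))) c 0] (mod int p)"
    by (rule orbit_cong) (rule orbit_prime_cong[OF p])
  also have "orbit (\<lambda>k. - (f (j + k * int p) + f (j + k * int p + int p))) c 0
           = orbit (\<lambda>k. f (j + k * int p)) (Suc c) 0"
  proof -
    have "(\<lambda>k. - (f (j + k * int p) + f (j + k * int p + int p)))
        = orbit (\<lambda>k. f (j + k * int p)) 1"
      by (simp add: fun_eq_iff algebra_simps)
    then show ?thesis
      by (simp only: Suc_eq_plus1 orbit_add)
  qed
  finally show ?case .
qed

lemma orbit_mult_prime_square_cong:
  assumes p: "prime p" "odd p"
  shows "[orbit f (c * p * p) j = orbit (\<lambda>k. f (j + k * int (p * p))) c 0] (mod int p)"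
proof -
  have "[orbit f (c * p * p) j = orbit (\<lambda>k. f (j + k * int p)) (c * p) 0] (mod int p)"
    by (rule orbit_mult_prime_cong[OF p])
  also have "[orbit (\<lambda>k. f (j + k * int p)) (c * p) 0
      = orbit (\<lambda>l. f (j + l * int p * int p)) c 0] (mod int p)"
    using orbit_mult_prime_cong[OF p, of "\<lambda>k. f (j + k * int p)" c 0] by (simp add: ac_simps)
  finally show ?thesis by (simp add: ac_simps)
qed

text \<open>A Bezout identity: the greatest common divisor of \<open>(1 + x)\<^sup>2\<^sup>4 - 1\<close> and
  \<open>x\<^sup>2\<^sup>4 - 1\<close> over \<open>\<rat>\<close> is \<open>1 + x + x\<^sup>2\<close>.\<close>

lemma bezout_orbit24:
  "[:-14877151663, 33733268828, -39209998903, 24332847240, 0, -14618605282, 9761484303,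
     6243225984, -15655307305, 8729493830, 7240423736, -15886408200, 8469722745,
     7452995900, -15863124495, 8446439040, 7240423736, -15603353410, 8677539935,
     6243225984, -14571362937, 9714241958:]
   * ([:-1, -1:] ^ 24 - 1) +
   [:-117574722720, -474626362632, -3414070129836, -21742012743056, -100046448826634,
     -346533911659256, -936352859024122, -2020500066032896, -3536504059550913,
     -5071960555491032, -5996739112593863, -5862530265311528, -4739999518632882,
     -3161290990574538, -1729064470398187, -767936451506688, -272722887969842,
     -75646884437834, -15798444515931, -2337661295904, -218570444055, -9714241958:]
   * (monom 1 24 - 1) = ([:117574722720, 117574722720, 117574722720:] :: int poly)"
  by (simp add: monom_altdef eval_nat_numeral one_pCons)

lemma three_term_zero_if_orbit24_fixed:
  fixes f :: "int \<Rightarrow> int"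
  assumes periodic: "\<And>n. f (n + 24) = f n" and fixed: "orbit f 24 = f"
  shows "f j + f (j + 1) + f (j + 2) = 0"
proof -
  have "poly_shift ([:-1, -1:] ^ 24 - 1) f = (\<lambda>_. 0)"
    using fixed by (simp add: fun_eq_iff poly_shift_diff orbit_eq_poly_shift)
  moreover have "poly_shift (monom 1 24 - 1) f = (\<lambda>_. 0)"
    by (simp add: fun_eq_iff poly_shift_diff poly_shift_monom_one periodic)
  ultimately have "poly_shift [:117574722720, 117574722720, 117574722720:] f j = 0"
    by (simp only: bezout_orbit24[symmetric] poly_shift_add poly_shift_mult
        poly_shift_zero_fun)
  then show ?thesis
    by (simp add: poly_shift_pCons algebra_simps)
qed

abbreviation iap :: "int list \<Rightarrow> int \<Rightarrow> int" where
  "iap A \<equiv> IAP A (rowmat A)"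

lemma IAP_add_24: "IAP A D (n + 24 * s) = IAP A D n + s * D ! nat (n mod 24)"
  by (simp add: IAP_def algebra_simps)

lemma length_rowmat [simp]: "length (rowmat A) = 24"
  by (simp add: rowmat_def)

lemma rowmat_nth:
  assumes "s < 24"
  shows "rowmat A ! s = A ! s + A ! (23 - s)"
proof -
  have "rowmat A ! s = (\<Sum>r<24. A ! r * X24 r s)"
    using assms by (simp add: rowmat_def)
  also have "\<dots> = (\<Sum>r<24. (if r = s then A ! r else 0) + (if r = 23 - s then A ! r else 0))"
    by (rule sum.cong) (auto simp: X24_def)
  also have "\<dots> = A ! s + A ! (23 - s)"
    using assms by (simp add: sum.distrib)
  finally show ?thesis .
qed

lemma iap_eq:
  "iap A n = A ! nat (n mod 24) + (n div 24) * (A ! nat (n mod 24) + A ! (23 - nat (n mod 24)))"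
  by (simp add: IAP_def rowmat_nth nat_less_iff)

lemma IAP_redmod_cong:
  assumes "length A = 24"
  shows "[IAP (redmod m A) (redmod m (rowmat (redmod m A))) n = iap A n] (mod int m)"
proof -
  define s where "s = nat (n mod 24)"
  have s: "s < 24" unfolding s_def by linarith
  have "IAP (redmod m A) (redmod m (rowmat (redmod m A))) n
     = A ! s mod m + (n div 24) * ((A ! s mod m + A ! (23 - s) mod m) mod m)"
    using s assms by (simp add: IAP_def s_def[symmetric] redmod_def rowmat_nth)
  also have "[A ! s mod m + (n div 24) * ((A ! s mod m + A ! (23 - s) mod m) mod m)
      = A ! s + (n div 24) * (A ! s + A ! (23 - s))] (mod int m)"
    by (intro cong_add cong_mult cong_refl) (auto simp: cong_def mod_add_eq)
  also have "A ! s + (n div 24) * (A ! s + A ! (23 - s)) = iap A n"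
    by (simp add: iap_eq s_def)
  finally show ?thesis .
qed

lemma iap_map2:
  assumes "length B = 24" "length C = 24"
  shows "iap (map2 (\<lambda>x y. a * x + b * y) B C) n = a * iap B n + b * iap C n"
proof -
  have "nat (n mod 24) < 24" by linarith
  then show ?thesis
    using assms by (simp add: iap_eq algebra_simps)
qed

section \<open>The generators have periodic orbits\<close>

definition seq_A1 :: "int \<Rightarrow> int" where
  "seq_A1 n = (if n mod 3 = 0 then 1 else if n mod 3 = 1 then 0 else -1)"

definition seq_A2 :: "int \<Rightarrow> int" where
  "seq_A2 n = (if n mod 3 = 0 then - (n div 3)
               else if n mod 3 = 1 then 2 * (n div 3) + 1 else - (n div 3) - 1)"

definition seq_drift :: "int \<Rightarrow> int" where
  "seq_drift n = (if n mod 3 = 2 then -2 else 1)"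

lemma length_A1 [simp]: "length A1 = 24"
  by (simp add: A1_def eval_nat_numeral)

lemma length_A2 [simp]: "length A2 = 24"
  by (simp add: A2_def)

lemma iap_A1_A2: "iap A1 n = seq_A1 n \<and> iap A2 n = seq_A2 n"
proof -
  define s where "s = nat (n mod 24)"
  define q where "q = n div 24"
  have n: "n = int s + 3 * (8 * q)"
    unfolding s_def q_def by simp
  have "n mod 3 = int s mod 3" "n div 3 = 8 * q + int s div 3"
    unfolding n by (simp_all only: mod_mult_self2 div_mult_self2 zero_neq_numeral not_False_eq_True)
  then have shift: "seq_A1 n = seq_A1 (int s)"
    "seq_A2 n = seq_A2 (int s) - 8 * q * (if int s mod 3 = 1 then -2 else 1)"
    unfolding seq_A1_def seq_A2_def by (auto simp: algebra_simps)
  have "s \<in> set [0..<24]"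
    unfolding s_def by auto
  then show ?thesis
    unfolding iap_eq s_def[symmetric] q_def[symmetric] shift
    by (simp add: upt_rec A1_def A2_def eval_nat_numeral seq_A1_def seq_A2_def)
      (elim disjE; simp add: algebra_simps)
qed

lemma seq_values:
  "seq_A1 (3 * k) = 1" "seq_A1 (3 * k + 1) = 0" "seq_A1 (3 * k + 2) = -1"
  "seq_A2 (3 * k) = - k" "seq_A2 (3 * k + 1) = 2 * k + 1" "seq_A2 (3 * k + 2) = - k - 1"
  "seq_drift (3 * k) = 1" "seq_drift (3 * k + 1) = 1" "seq_drift (3 * k + 2) = -2"
  by (simp_all add: seq_A1_def seq_A2_def seq_drift_def)

lemma orbit_3: "orbit h 3 n = - h n - 3 * h (n + 1) - 3 * h (n + 2) - h (n + 3)"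
  by (simp add: numeral_3_eq_3 algebra_simps)

lemma orbit_seq_3:
  "orbit seq_A1 3 = seq_A1" "orbit seq_drift 3 = seq_drift"
  "orbit seq_A2 3 = (\<lambda>n. seq_A2 n + seq_drift n)"
proof -
  have "orbit seq_A1 3 n = seq_A1 n \<and> orbit seq_drift 3 n = seq_drift n \<and>
    orbit seq_A2 3 n = seq_A2 n + seq_drift n" for n
  proof -
    have "n mod 3 = 0 \<or> n mod 3 = 1 \<or> n mod 3 = 2"
      by linarith
    then obtain k where "n = 3 * k \<or> n = 3 * k + 1 \<or> n = 3 * k + 2"
      using div_mult_mod_eq[of n 3] by (metis add.right_neutral mult.commute)
    then show ?thesis
    proof (elim disjE)
      assume n: "n = 3 * k"
      have "3 * k + 3 = 3 * (k + 1)"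
        by simp
      then show ?thesis
        unfolding orbit_3 n by (simp only: seq_values) simp
    next
      assume n: "n = 3 * k + 1"
      have "3 * k + 1 + 1 = 3 * k + 2" "3 * k + 1 + 2 = 3 * (k + 1)"
        "3 * k + 1 + 3 = 3 * (k + 1) + 1"
        by simp_all
      then show ?thesis
        unfolding orbit_3 n by (simp only: seq_values) (simp add: algebra_simps)
    next
      assume n: "n = 3 * k + 2"
      have "3 * k + 2 + 1 = 3 * (k + 1)" "3 * k + 2 + 2 = 3 * (k + 1) + 1"
        "3 * k + 2 + 3 = 3 * (k + 1) + 2"
        by simp_all
      then show ?thesis
        unfolding orbit_3 n by (simp only: seq_values) (simp add: algebra_simps)
    qed
  qed
  then show "orbit seq_A1 3 = seq_A1" "orbit seq_drift 3 = seq_drift"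
    "orbit seq_A2 3 = (\<lambda>n. seq_A2 n + seq_drift n)"
    by (simp_all add: fun_eq_iff)
qed

lemma orbit_seq_mult_3:
  "orbit seq_A1 (3 * c) = seq_A1" "orbit seq_drift (3 * c) = seq_drift"
  "orbit seq_A2 (3 * c) = (\<lambda>n. seq_A2 n + int c * seq_drift n)"
proof -
  show A1: "orbit seq_A1 (3 * c) = seq_A1" and drift: "orbit seq_drift (3 * c) = seq_drift" for c
    by (induction c) (simp_all add: orbit_add orbit_seq_3)
  show "orbit seq_A2 (3 * c) = (\<lambda>n. seq_A2 n + int c * seq_drift n)"
  proof (induction c)
    case 0
    show ?case by (simp add: fun_eq_iff)
  next
    case (Suc c)
    have "orbit seq_A2 (3 * Suc c) = orbit (\<lambda>n. seq_A2 n + int c * seq_drift n) 3"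
      by (simp add: orbit_add Suc.IH)
    also have "\<dots> = (\<lambda>n. seq_A2 n + int (Suc c) * seq_drift n)"
      by (simp only: fun_eq_iff orbit_plus orbit_scale orbit_seq_3) (simp add: algebra_simps)
    finally show ?case .
  qed
qed

lemma iap_span:
  "iap (map2 (\<lambda>x y. a * x + b * y) A1 A2) = (\<lambda>n. a * seq_A1 n + b * seq_A2 n)"
  by (simp add: fun_eq_iff iap_map2 iap_A1_A2)

lemma span_subset_Pset: "span2 A1 A2 \<subseteq> Pset m"
proof
  fix A
  assume "A \<in> span2 A1 A2"
  then obtain a b where A: "A = map2 (\<lambda>x y. a * x + b * y) A1 A2"
    by (auto simp: span2_def)
  have len: "length A = 24"
    by (simp add: A)
  define f where "f = IAP (redmod m A) (redmod m (rowmat (redmod m A)))"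
  have f_cong: "[orbit f i j = orbit (iap A) i j] (mod int m)" for i j
    by (rule orbit_cong) (simp add: f_def IAP_redmod_cong[OF len])
  have u: "iap A = (\<lambda>n. a * seq_A1 n + b * seq_A2 n)"
    unfolding A by (rule iap_span)
  have "orbit (iap A) (24 * m)
      = (\<lambda>n. a * orbit seq_A1 (3 * (8 * m)) n + b * orbit seq_A2 (3 * (8 * m)) n)"
    by (simp add: u fun_eq_iff orbit_plus orbit_scale)
  also have "\<dots> = (\<lambda>n. iap A n + int m * (8 * b * seq_drift n))"
    by (simp only: orbit_seq_mult_3) (simp add: u fun_eq_iff algebra_simps)
  finally have "orbit (iap A) (i + 24 * m) j
      = orbit (iap A) i j + int m * (8 * b * orbit seq_drift i j)" for i j
    by (simp only: orbit_add orbit_plus orbit_scale)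
  then have vertical: "[orbit (iap A) (i + 24 * m) j = orbit (iap A) i j] (mod int m)" for i j
    by (simp add: cong_iff_dvd_diff)
  have "[f (n + 24 * int m) = f n] (mod int m)" for n
    by (simp add: f_def IAP_add_24 cong_iff_dvd_diff)
  then have horizontal: "[orbit f i (j + 24 * int m) = orbit f i j] (mod int m)" for i j
    using orbit_cong[of "\<lambda>n. f (n + 24 * int m)" f] by (simp add: orbit_shift)
  show "A \<in> Pset m"
    unfolding Pset_def periodic_mod_def mem_Collect_eq f_def[symmetric]
    using len horizontal f_cong vertical by (meson cong_sym cong_trans)
qed

section \<open>Periodic orbits force the generators\<close>

definition common_diff :: "int list \<Rightarrow> int \<Rightarrow> int" where
  "common_diff A n = rowmat A ! nat (n mod 24)"

definition offset :: "int list \<Rightarrow> int \<Rightarrow> int" where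
  "offset A n = 24 * iap A n - n * common_diff A n"

lemma common_diff_add_24 [simp]: "common_diff A (n + 24 * k) = common_diff A n"
  by (simp add: common_diff_def)

lemma offset_add_24 [simp]: "offset A (n + 24 * k) = offset A n"
  unfolding offset_def common_diff_add_24 IAP_add_24 by (simp add: common_diff_def algebra_simps)

lemma prime_square_mod_24:
  assumes "prime p" "p \<ge> 5"
  shows "p * p mod 24 = (1::nat)"
proof -
  have "\<not> 2 dvd p" "\<not> 3 dvd p"
    using assms by (auto simp: prime_nat_iff)
  then have "p mod 24 = 1 \<or> p mod 24 = 5 \<or> p mod 24 = 7 \<or> p mod 24 = 11 \<or>
      p mod 24 = 13 \<or> p mod 24 = 17 \<or> p mod 24 = 19 \<or> p mod 24 = 23"
    by presburger
  moreover have "p * p mod 24 = (p mod 24) * (p mod 24) mod 24"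
    by (simp add: mod_mult_eq)
  ultimately show ?thesis
    by auto
qed

lemma Pset_orbit_cong:
  assumes A: "A \<in> Pset m"
  shows "[orbit (iap A) (24 * m) j = iap A j] (mod int m)"
proof -
  have len: "length A = 24"
    using A by (simp add: Pset_def)
  define f where "f = IAP (redmod m A) (redmod m (rowmat (redmod m A)))"
  have f_cong: "[orbit f i j = orbit (iap A) i j] (mod int m)" for i
    unfolding f_def by (rule orbit_cong) (rule IAP_redmod_cong[OF len])
  have "[orbit f (0 + 24 * m) j = orbit f 0 j] (mod int m)"
    using A unfolding Pset_def periodic_mod_def f_def by blast
  then have "[orbit f (24 * m) j = f j] (mod int m)"
    by simp
  then show ?thesis
    using cong_trans[OF cong_trans[OF cong_sym[OF f_cong]] f_cong[of 0, unfolded orbit.simps(1)]]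
    by blast
qed

lemma Pset_prime_square_cong:
  assumes p: "prime p" "p \<ge> 5" and A: "A \<in> Pset (p * p)"
  shows "[orbit (offset A) 24 j + j * orbit (common_diff A) 24 j
      = offset A j + j * common_diff A j] (mod int p)"
proof -
  have "odd p"
    using p prime_odd_nat by auto
  define t where "t = int (p * p div 24)"
  have pp: "int (p * p) = 1 + 24 * t"
    unfolding t_def using div_mult_mod_eq[of "p * p" 24] prime_square_mod_24[OF p] by linarith
  have period: "[orbit (iap A) (24 * p * p) j = iap A j] (mod int p)"
    using cong_dvd_modulus[OF Pset_orbit_cong[OF A], of "int p"] by (simp add: mult.assoc)
  have "24 * iap A (j + k * int (p * p))
      = offset A (k + j) + (j + k * int (p * p)) * common_diff A (k + j)" for k
  proof -
    \<comment> \<open>sampling with step \<open>p\<^sup>2 = 1 + 24 t\<close> visits the residues in order\<close>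
    have e: "j + k * int (p * p) = (k + j) + 24 * (k * t)"
      unfolding pp by (simp add: algebra_simps)
    show ?thesis
      unfolding e using offset_def[of A "(k + j) + 24 * (k * t)"] by simp
  qed
  then have sample: "[offset A (k + j) + j * common_diff A (k + j)
      = 24 * iap A (j + k * int (p * p))] (mod int p)" for k
    by (simp add: cong_iff_dvd_diff algebra_simps)
  have "orbit (offset A) 24 j + j * orbit (common_diff A) 24 j
      = orbit (\<lambda>k. offset A (k + j) + j * common_diff A (k + j)) 24 0"
    by (simp add: orbit_plus orbit_scale orbit_shift)
  also have "[orbit (\<lambda>k. offset A (k + j) + j * common_diff A (k + j)) 24 0
      = orbit (\<lambda>k. 24 * iap A (j + k * int (p * p))) 24 0] (mod int p)"
    by (rule orbit_cong) (rule sample)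
  also have "orbit (\<lambda>k. 24 * iap A (j + k * int (p * p))) 24 0
      = 24 * orbit (\<lambda>k. iap A (j + k * int (p * p))) 24 0"
    by (rule orbit_scale)
  also have "[24 * orbit (\<lambda>k. iap A (j + k * int (p * p))) 24 0 = 24 * iap A j] (mod int p)"
    using cong_trans[OF cong_sym[OF orbit_mult_prime_square_cong[OF p(1) \<open>odd p\<close>]] period]
    by (rule cong_scalar_left)
  also have "24 * iap A j = offset A j + j * common_diff A j"
    by (simp add: offset_def)
  finally show ?thesis .
qed

lemma int_eq_if_cong_large_primes:
  fixes x y :: int
  assumes "\<And>p. prime p \<Longrightarrow> p \<ge> 5 \<Longrightarrow> [x = y] (mod int p)"
  shows "x = y"
proof (rule ccontr)
  assume "x \<noteq> y"
  obtain p where p: "prime p" "p > nat \<bar>x - y\<bar> + 5"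
    using bigger_prime by blast
  then have "int p dvd x - y"
    using assms[OF p(1)] by (simp add: cong_iff_dvd_diff)
  then have "int p \<le> \<bar>x - y\<bar>"
    using dvd_imp_le_int[of "x - y" "int p"] \<open>x \<noteq> y\<close> by simp
  then show False
    using p by linarith
qed

lemma orbit24_fixes_offset_common_diff:
  assumes A: "A \<in> (\<Inter>m\<in>{m. m \<ge> 1 \<and> odd m}. Pset m)"
  shows "orbit (common_diff A) 24 = common_diff A" "orbit (offset A) 24 = offset A"
proof -
  have eq: "orbit (offset A) 24 j + j * orbit (common_diff A) 24 j
      = offset A j + j * common_diff A j" for j
  proof (rule int_eq_if_cong_large_primes)
    fix p :: nat
    assume p: "prime p" "p \<ge> 5"
    then have "A \<in> Pset (p * p)"
      using A prime_odd_nat[of p] by auto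
    then show "[orbit (offset A) 24 j + j * orbit (common_diff A) 24 j
        = offset A j + j * common_diff A j] (mod int p)"
      by (rule Pset_prime_square_cong[OF p])
  qed
  have "orbit h 24 (j + 24) = orbit h 24 j" if "\<And>n. h (n + 24 * 1) = h n" for h j
    using that orbit_shift[of h 24 24 j] by simp
  then have "orbit (offset A) 24 (j + 24) = orbit (offset A) 24 j"
    "orbit (common_diff A) 24 (j + 24) = orbit (common_diff A) 24 j" for j
    by (simp_all only: offset_add_24 common_diff_add_24)
  then have "24 * orbit (common_diff A) 24 j = 24 * common_diff A j" for j
    using eq[of j] eq[of "j + 24"] offset_add_24[of A j 1] common_diff_add_24[of A j 1]
    by (simp add: algebra_simps)
  then show common_diff: "orbit (common_diff A) 24 = common_diff A"
    by (simp add: fun_eq_iff)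
  show "orbit (offset A) 24 = offset A"
    using eq by (simp add: common_diff fun_eq_iff)
qed

lemma three_term_zero_offset_common_diff:
  assumes "A \<in> (\<Inter>m\<in>{m. m \<ge> 1 \<and> odd m}. Pset m)"
  shows "common_diff A n + common_diff A (n + 1) + common_diff A (n + 2) = 0"
    "offset A n + offset A (n + 1) + offset A (n + 2) = 0"
  using orbit24_fixes_offset_common_diff[OF assms]
    three_term_zero_if_orbit24_fixed[of "common_diff A"] three_term_zero_if_orbit24_fixed[of "offset A"]
    common_diff_add_24[of A _ 1] offset_add_24[of A _ 1]
  by simp_all

lemma iap_nth: "i < 24 \<Longrightarrow> iap A (int i) = A ! i"
  by (simp add: iap_eq)

lemma three_term_zero_shift_3:
  assumes "\<And>n. h n + h (n + 1) + h (n + 2) = (0::int)"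
  shows "h (c + 3 * int k) = h c"
proof (induction k)
  case 0
  show ?case by simp
next
  case (Suc k)
  have "h (c + 3 * int k + 3) = h (c + 3 * int k)"
    using assms[of "c + 3 * int k"] assms[of "c + 3 * int k + 1"] by (simp add: add.assoc)
  then show ?case
    using Suc.IH by (simp add: algebra_simps)
qed

lemma eq_span_if_three_term_zero:
  assumes len: "length A = 24"
    and diff_three: "\<And>n. common_diff A n + common_diff A (n + 1) + common_diff A (n + 2) = 0"
    and offset_three: "\<And>n. offset A n + offset A (n + 1) + offset A (n + 2) = 0"
  shows "A = map2 (\<lambda>x y. A ! 0 * x + A ! 1 * y) A1 A2"
proof -
  have u: "iap A (-1) = - A ! 0" "iap A 0 = A ! 0" "iap A 1 = A ! 1"
    by (simp_all add: iap_eq rowmat_nth)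
  \<comment> \<open>\<open>X24\<close> is symmetric, so the differences at the residues 23 and 0 agree\<close>
  have "common_diff A (-1) = common_diff A 0"
    by (simp add: common_diff_def rowmat_nth)
  then have "common_diff A 1 = -2 * common_diff A 0" "3 * common_diff A 0 = -24 * A ! 1"
    using diff_three[of "-1"] offset_three[of "-1"] by (simp_all add: offset_def u)
  then have d: "common_diff A 0 = -8 * A ! 1" "common_diff A 1 = 16 * A ! 1"
      "common_diff A 2 = -8 * A ! 1"
    using diff_three[of 0] by simp_all
  have b: "offset A 0 = 24 * A ! 0" "offset A 1 = 8 * A ! 1" "offset A 2 = - 24 * A ! 0 - 8 * A ! 1"
    using offset_three[of 0] by (simp_all add: offset_def u d)
  have entries: "A ! i = A ! 0 * A1 ! i + A ! 1 * A2 ! i" if "i < 24" for i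
  proof -
    define k c where "k = i div 3" and "c = i mod 3"
    have "i = 3 * k + c" "c < 3"
      unfolding k_def c_def by simp_all
    then have i: "int i = 3 * int k + int c"
      by simp
    have entry: "24 * A ! i = offset A (int c) + int i * common_diff A (int c)"
      using three_term_zero_shift_3[OF offset_three, of "int c" k]
        three_term_zero_shift_3[OF diff_three, of "int c" k]
        iap_nth[OF that, of A] by (simp add: offset_def i add.commute)
    have seqs: "A1 ! i = seq_A1 (3 * int k + int c)" "A2 ! i = seq_A2 (3 * int k + int c)"
      using iap_A1_A2[of "int i"] iap_nth[OF that] by (simp_all add: i)
    have "c = 0 \<or> c = 1 \<or> c = 2"
      using \<open>c < 3\<close> by auto
    then have "24 * A ! i = 24 * (A ! 0 * A1 ! i + A ! 1 * A2 ! i)"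
    proof (elim disjE)
      assume c: "c = 0"
      then have a: "A1 ! i = 1" "A2 ! i = - int k"
        using seqs by (simp_all add: seq_values)
      show ?thesis
        unfolding a using entry c by (simp add: i d b algebra_simps)
    next
      assume c: "c = 1"
      then have a: "A1 ! i = 0" "A2 ! i = 2 * int k + 1"
        using seqs by (simp_all add: seq_values)
      show ?thesis
        unfolding a using entry c by (simp add: i d b algebra_simps)
    next
      assume c: "c = 2"
      then have a: "A1 ! i = -1" "A2 ! i = - int k - 1"
        using seqs by (simp_all add: seq_values)
      show ?thesis
        unfolding a using entry c by (simp add: i d b algebra_simps)
    qed
    then show ?thesis
      by simp
  qed
  show ?thesis
  proof (rule nth_equalityI)
    show "length A = length (map2 (\<lambda>x y. A ! 0 * x + A ! 1 * y) A1 A2)"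
      using len by simp
    fix i
    assume "i < length A"
    then show "A ! i = map2 (\<lambda>x y. A ! 0 * x + A ! 1 * y) A1 A2 ! i"
      using entries[of i] len by simp
  qed
qed

lemma Inter_odd_Pset_subset_span: "(\<Inter>m\<in>{m. m \<ge> 1 \<and> odd m}. Pset m) \<subseteq> span2 A1 A2"
proof
  fix A
  assume A: "A \<in> (\<Inter>m\<in>{m. m \<ge> 1 \<and> odd m}. Pset m)"
  then have "length A = 24"
    by (auto simp: Pset_def)
  then have "A = map2 (\<lambda>x y. A ! 0 * x + A ! 1 * y) A1 A2"
    by (rule eq_span_if_three_term_zero) (use three_term_zero_offset_common_diff[OF A] in auto)
  then show "A \<in> span2 A1 A2"
    unfolding span2_def by blast
qed

theorem theorem15:
  shows "(\<Inter>m\<in>{m::nat. m \<ge> 1}. Pset m) = (\<Inter>m\<in>{m::nat. m \<ge> 1 \<and> odd m}. Pset m)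
       \<and> (\<Inter>m\<in>{m::nat. m \<ge> 1 \<and> odd m}. Pset m) = span2 A1 A2"
proof -
  have "span2 A1 A2 \<subseteq> (\<Inter>m\<in>{m::nat. m \<ge> 1}. Pset m)"
    using span_subset_Pset by blast
  moreover have "(\<Inter>m\<in>{m::nat. m \<ge> 1}. Pset m) \<subseteq> (\<Inter>m\<in>{m::nat. m \<ge> 1 \<and> odd m}. Pset m)"
    by blast
  ultimately show ?thesis
    using Inter_odd_Pset_subset_span by blast
qed

end
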